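(* Let $\gamma$ be an oriented geodesic on the modular surface $\Sigma_{\mathrm{Mod}}$ obtained by projecting the simple closed curve $p/q\subset\Sigma_{1,1}$ via the 6-fold covering map $\Sigma_{1,1}\to\Sigma_{\mathrm{Mod}}$. Then under the covering map, $\gamma$ has six lifts in $\Sigma_{1,1}$: the curves $p/q$, $q/(q-p)$, $(p-q)/p$, and each of these three curves oriented in the opposite direction.
   Context: $\Sigma_{\mathrm{Mod}}=\mathbb{H}^2/\mathrm{PSL}(2,\mathbb{Z})$. The once-punctured torus $\Sigma_{1,1}$ is viewed as a quotient of $\mathbb{R}^2$ tiled by equilateral triangles with the vertex lattice $\Lambda$ removed, modulo the translations along two edge directions; the curve $p/q$ (coprime, $1/0$ allowed) is the projection of a line of slope $p/q$ avoiding $\Lambda$, measured with respect to the two edge directions as coordinate axes. The 6-fold covering $\Sigma_{1,1}\to\Sigma_{\mathrm{Mod}}$ is the quotient by the group generated by the rotation of order three about the centre of a triangle and the rotation of order two about the midpoint of an edge. *)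

theory Defs
  imports Complex_Main
begin

text \<open>The vertex lattice of the tiling by
equilateral triangles is spanned by the two edge directions 1 and omega = exp(2 pi i/3)
(these are the coordinate axes for measuring slopes).\<close>

definition omega :: complex where
  "omega = cis (2 * pi / 3)"

definition Lambda :: "complex set" where
  "Lambda = {of_int a + of_int b * omega | a b. True}"

definition tri_centre :: complex where
  "tri_centre = (0 + 1 + (1 + omega)) / 3"

definition rot3 :: "complex \<Rightarrow> complex" where
  "rot3 z = tri_centre + omega * (z - tri_centre)"

definition rot2 :: "complex \<Rightarrow> complex" where
  "rot2 z = 2 * (1/2) - z"

text \<open>Group of affine maps of the plane generated by the two rotations together with the
lattice translations (the translations are the deck group of the plane over the torus, so the
quotient of this group by them is the 6-element group acting on the punctured torus).  Since
every generator has an inverse that is a product of generators, closure under composition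
gives the generated group.\<close>

inductive_set deck_group :: "(complex \<Rightarrow> complex) set" where
  dg_id: "id \<in> deck_group"
| dg_rot3: "rot3 \<in> deck_group"
| dg_rot2: "rot2 \<in> deck_group"
| dg_transl: "l \<in> Lambda \<Longrightarrow> (\<lambda>z. z + l) \<in> deck_group"
| dg_comp: "f \<in> deck_group \<Longrightarrow> g \<in> deck_group \<Longrightarrow> f \<circ> g \<in> deck_group"

text \<open>An oriented line in the plane avoiding the lattice that projects to the oriented curve
p/q: coprime p q, and the line runs (positively) in the direction q * 1 + p * omega, i.e.
has slope p/q in the coordinates given by the two edge directions.\<close>

definition oriented_slope_line :: "(real \<Rightarrow> complex) \<Rightarrow> int \<Rightarrow> int \<Rightarrow> bool" where
  "oriented_slope_line l p q \<longleftrightarrow> coprime p q \<and>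
     (\<exists>z0 c. c > 0 \<and>
        l = (\<lambda>t. z0 + complex_of_real (c * t) * (of_int q + of_int p * omega)) \<and>
        (\<forall>t. l t \<notin> Lambda))"

end

theory Submission
  imports Defs
begin

text \<open>Every element of the deck group is an affine map z \<mapsto> \<zeta>^k z + w with w \<in> Lambda and
\<zeta> = 1 + omega = exp(i pi/3); such a map preserves Lambda and its complement, so it sends the
line of direction q + p omega to a line of direction \<zeta>^k (q + p omega).  Multiplication by \<zeta>
acts on these coordinates as (p, q) \<mapsto> (q, q - p), a map of period six, and a primitive integer
direction is determined by the ray it spans.  Hence the slopes of the images of the line are
exactly the orbit of (p, q), whose six points are distinct because (p, q) \<noteq> (0, 0).\<close>

definition zeta :: complex where
  "zeta = 1 + omega"

definition slope_vector :: "int \<Rightarrow> int \<Rightarrow> complex" where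
  "slope_vector p q = of_int q + of_int p * omega"

definition hex_turn :: "int \<times> int \<Rightarrow> int \<times> int" where
  "hex_turn = (\<lambda>(p, q). (q, q - p))"

lemma hex_turn_apply [simp]: "hex_turn (p, q) = (q, q - p)"
  by (simp add: hex_turn_def)

lemma oriented_slope_line_iff:
  "oriented_slope_line l p q \<longleftrightarrow> coprime p q \<and>
     (\<exists>z0 c. c > 0 \<and> l = (\<lambda>t. z0 + complex_of_real (c * t) * slope_vector p q) \<and>
        (\<forall>t. l t \<notin> Lambda))"
  by (simp add: oriented_slope_line_def slope_vector_def)

lemma omega_eq: "omega = Complex (-1/2) (sqrt 3 / 2)"
  by (simp add: omega_def cis.ctr cos_120 sin_120)

lemma omega_squared: "omega\<^sup>2 = -1 - omega"
  by (simp add: omega_eq complex_eq_iff power2_eq_square field_simps)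

lemma zeta_squared: "zeta\<^sup>2 = omega"
  by (simp add: zeta_def power2_sum omega_squared)

lemma zeta_cube: "zeta ^ 3 = -1"
proof -
  have "zeta ^ 3 = zeta * zeta\<^sup>2"
    by (simp add: power2_eq_square power3_eq_cube)
  also have "\<dots> = omega + omega\<^sup>2"
    by (simp only: zeta_squared) (simp add: zeta_def power2_eq_square algebra_simps)
  also have "\<dots> = -1"
    by (simp add: omega_squared)
  finally show ?thesis .
qed

lemma zeta_pow_6: "zeta ^ 6 = 1"
  using power_mult[of zeta 3 2] by (simp add: zeta_cube)

lemma zeta_mult_slope_vector: "zeta * slope_vector p q = slope_vector q (q - p)"
proof -
  have "zeta * slope_vector p q = of_int q + of_int (p + q) * omega + of_int p * omega\<^sup>2"
    by (simp add: zeta_def slope_vector_def power2_eq_square algebra_simps)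
  then show ?thesis
    by (simp add: omega_squared slope_vector_def algebra_simps)
qed

lemma zeta_pow_mult_slope_vector:
  assumes "(hex_turn ^^ k) (p, q) = (a, b)"
  shows "zeta ^ k * slope_vector p q = slope_vector a b"
  using assms
proof (induction k arbitrary: a b)
  case (Suc k)
  obtain a' b' where turn: "(hex_turn ^^ k) (p, q) = (a', b')" by fastforce
  with Suc.prems have "(a, b) = (b', b' - a')" by simp
  then show ?case
    using Suc.IH[OF turn] by (simp add: mult.assoc zeta_mult_slope_vector)
qed simp

lemma coprime_funpow_hex_turn:
  assumes "coprime p q" "(hex_turn ^^ k) (p, q) = (a, b)"
  shows "coprime a b"
  using assms(2)
proof (induction k arbitrary: a b)
  case 0
  then show ?case using assms(1) by simp
next
  case (Suc k)
  obtain a' b' where turn: "(hex_turn ^^ k) (p, q) = (a', b')" by fastforce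
  with Suc.prems have "a = b'" "b = b' - a'" by simp_all
  then show ?case
    using Suc.IH[OF turn] by (metis coprime_iff_gcd_eq_1 gcd.commute gcd_diff2)
qed

lemma hex_turn_orbit:
  "range (\<lambda>k. (hex_turn ^^ k) (p, q)) =
     {(p, q), (-p, -q), (q, q - p), (-q, p - q), (p - q, p), (q - p, -p)}"
proof -
  let ?orbit = "\<lambda>k. (hex_turn ^^ k) (p, q)"
  have period: "(hex_turn ^^ 6) (p, q) = (p, q)"
    by (simp add: numeral_eq_Suc)
  have periodic: "?orbit k = ?orbit (k mod 6)" for k
    using funpow_mod_eq[where f = hex_turn and n = 6 and m = k, OF period] by (rule sym)
  have "range ?orbit = ?orbit ` {0..<6}"
  proof (rule subset_antisym)
    show "range ?orbit \<subseteq> ?orbit ` {0..<6}"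
    proof
      fix x
      assume "x \<in> range ?orbit"
      then obtain k where "x = ?orbit k"
        by blast
      then have "x = ?orbit (k mod 6)"
        using periodic[of k] by (rule trans)
      then show "x \<in> ?orbit ` {0..<6}" by simp
    qed
  qed auto
  also have "{0..<6} = {0, 1, 2, 3, 4, 5 :: nat}"
    by auto
  finally show ?thesis
    by (auto simp: numeral_eq_Suc)
qed

lemma card_hex_turn_orbit:
  fixes p q :: int
  assumes "(p, q) \<noteq> (0, 0)"
  shows "card {(p, q), (-p, -q), (q, q - p), (-q, p - q), (p - q, p), (q - p, -p)} = 6"
proof -
  have "distinct [(p, q), (-p, -q), (q, q - p), (-q, p - q), (p - q, p), (q - p, -p)]"
    using assms by auto
  from distinct_card[OF this] show ?thesis
    unfolding list.set by simp
qed

lemma Lambda_iff: "z \<in> Lambda \<longleftrightarrow> (\<exists>p q. z = slope_vector p q)"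
  unfolding Lambda_def slope_vector_def by blast

lemma zero_in_Lambda: "0 \<in> Lambda"
  unfolding Lambda_iff slope_vector_def by (rule exI[of _ 0], rule exI[of _ 0]) simp

lemma one_in_Lambda: "1 \<in> Lambda"
  unfolding Lambda_iff slope_vector_def by (rule exI[of _ 0], rule exI[of _ 1]) simp

lemma omega_in_Lambda: "omega \<in> Lambda"
  unfolding Lambda_iff slope_vector_def by (rule exI[of _ 1], rule exI[of _ 0]) simp

lemma Lambda_add:
  assumes "x \<in> Lambda" "y \<in> Lambda"
  shows "x + y \<in> Lambda"
proof -
  obtain p q p' q' where "x = slope_vector p q" "y = slope_vector p' q'"
    using assms unfolding Lambda_iff by blast
  then have "x + y = slope_vector (p + p') (q + q')"
    by (simp add: slope_vector_def algebra_simps)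
  then show ?thesis unfolding Lambda_iff by blast
qed

lemma Lambda_uminus:
  assumes "x \<in> Lambda"
  shows "- x \<in> Lambda"
proof -
  obtain p q where "x = slope_vector p q"
    using assms unfolding Lambda_iff by blast
  then have "- x = slope_vector (- p) (- q)"
    by (simp add: slope_vector_def algebra_simps)
  then show ?thesis unfolding Lambda_iff by blast
qed

lemma Lambda_zeta_pow_mult:
  assumes "x \<in> Lambda"
  shows "zeta ^ k * x \<in> Lambda"
proof -
  obtain p q where "x = slope_vector p q"
    using assms unfolding Lambda_iff by blast
  moreover obtain a b where "(hex_turn ^^ k) (p, q) = (a, b)" by fastforce
  ultimately have "zeta ^ k * x = slope_vector a b"
    by (simp add: zeta_pow_mult_slope_vector)
  then show ?thesis unfolding Lambda_iff by blast
qed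

lemma Lambda_affine_preimage:
  assumes "w \<in> Lambda" "zeta ^ k * z + w \<in> Lambda"
  shows "z \<in> Lambda"
proof -
  have "zeta * zeta ^ 5 = 1"
    using zeta_pow_6 by (simp add: numeral_eq_Suc)
  then have "zeta ^ k * zeta ^ (5 * k) = 1"
    by (simp add: power_mult flip: power_mult_distrib)
  then have "z = zeta ^ (5 * k) * ((zeta ^ k * z + w) + - w)"
    by (simp add: algebra_simps)
  then show ?thesis
    by (metis assms Lambda_add Lambda_uminus Lambda_zeta_pow_mult)
qed

lemma rot3_eq: "rot3 = (\<lambda>z. omega * z + 1)"
  by (simp add: fun_eq_iff rot3_def tri_centre_def omega_eq complex_eq_iff field_simps)

lemma rot2_eq: "rot2 = (\<lambda>z. - z + 1)"
  by (simp add: fun_eq_iff rot2_def)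

lemma deck_group_affine:
  assumes "g \<in> deck_group"
  shows "\<exists>k w. w \<in> Lambda \<and> g = (\<lambda>z. zeta ^ k * z + w)"
  using assms
proof induction
  case dg_id
  show ?case by (intro exI[of _ 0] exI[of _ 0]) (simp add: zero_in_Lambda fun_eq_iff)
next
  case dg_rot3
  show ?case
    by (intro exI[of _ 2] exI[of _ 1]) (simp add: rot3_eq zeta_squared one_in_Lambda)
next
  case dg_rot2
  show ?case
    by (intro exI[of _ 3] exI[of _ 1]) (simp add: rot2_eq zeta_cube one_in_Lambda)
next
  case (dg_transl w)
  then show ?case by (intro exI[of _ 0] exI[of _ w]) simp
next
  case (dg_comp f g)
  then obtain k w k' w' where "w \<in> Lambda" "f = (\<lambda>z. zeta ^ k * z + w)"
    "w' \<in> Lambda" "g = (\<lambda>z. zeta ^ k' * z + w')"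
    by blast
  moreover have "zeta ^ k * w' + w \<in> Lambda"
    using calculation by (simp add: Lambda_add Lambda_zeta_pow_mult)
  ultimately show ?case
    by (intro exI[of _ "k + k'"] exI[of _ "zeta ^ k * w' + w"])
      (simp add: fun_eq_iff power_add algebra_simps)
qed

lemma zeta_pow_rotation_in_deck_group: "(\<lambda>z. zeta ^ k * z) \<in> deck_group"
proof (induction k)
  case 0
  then show ?case using dg_id by (simp add: id_def)
next
  case (Suc k)
  have "(\<lambda>z. z + omega) \<circ> rot2 \<circ> rot3 \<circ> rot3 = (\<lambda>z. zeta * z)"
    by (simp add: fun_eq_iff rot2_eq rot3_eq zeta_def omega_squared[unfolded power2_eq_square]
        algebra_simps)
  then have "(\<lambda>z. zeta * z) \<in> deck_group"
    by (metis dg_comp dg_rot2 dg_rot3 dg_transl omega_in_Lambda)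
  from dg_comp[OF this Suc] show ?case
    by (simp add: comp_def mult.assoc)
qed

lemma coprime_eq_if_pos_multiple:
  fixes a b a' b' :: int and r :: real
  assumes "coprime a b" "coprime a' b'" "r > 0" "of_int a = r * of_int a'" "of_int b = r * of_int b'"
  shows "(a, b) = (a', b')"
proof -
  obtain x y where xy: "x * a' + y * b' = 1"
    using bezout_int[of a' b'] assms(2) by auto
  define m where "m = x * a + y * b"
  have "of_int m = r * of_int (x * a' + y * b')"
    using assms(4,5) by (simp add: m_def algebra_simps)
  then have r_int: "r = of_int m"
    using xy by simp
  have "a = m * a'" "b = m * b'"
    using assms(4,5) r_int by (metis of_int_eq_iff of_int_mult)+
  then have "is_unit m"
    using assms(1) coprime_common_divisor by (metis dvd_triv_left)
  moreover have "m > 0" using assms(3) r_int by simp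
  ultimately show ?thesis using \<open>a = m * a'\<close> \<open>b = m * b'\<close> by simp
qed

lemma slope_vector_ray_eq:
  assumes "coprime a b" "coprime a' b'" "c > 0" "c' > 0"
    and "complex_of_real c * slope_vector a b = complex_of_real c' * slope_vector a' b'"
  shows "(a, b) = (a', b')"
proof -
  have "c * of_int a = c' * of_int a'"
    and "c * (of_int b - of_int a / 2) = c' * (of_int b' - of_int a' / 2)"
    using assms(5) by (simp_all add: slope_vector_def omega_eq complex_eq_iff)
  then have "c * of_int a = c' * of_int a'" "c * of_int b = c' * of_int b'"
    by (simp_all add: right_diff_distrib)
  then have "of_int a = c' / c * of_int a'" "of_int b = c' / c * of_int b'"
    using \<open>c > 0\<close> by (simp_all add: field_simps)
  moreover have "c' / c > 0"
    using \<open>c > 0\<close> \<open>c' > 0\<close> by simp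
  ultimately show ?thesis
    using assms(1,2) coprime_eq_if_pos_multiple by blast
qed

lemma oriented_slope_line_affine_image_iff:
  assumes "oriented_slope_line l p q" "w \<in> Lambda"
  shows "oriented_slope_line ((\<lambda>z. zeta ^ k * z + w) \<circ> l) a b \<longleftrightarrow> (a, b) = (hex_turn ^^ k) (p, q)"
proof -
  obtain z0 c where "coprime p q" "c > 0" and
    l: "l = (\<lambda>t. z0 + complex_of_real (c * t) * slope_vector p q)" and avoids: "\<forall>t. l t \<notin> Lambda"
    using assms(1) unfolding oriented_slope_line_iff by blast
  obtain a' b' where turn: "(hex_turn ^^ k) (p, q) = (a', b')" by fastforce
  have "coprime a' b'" using \<open>coprime p q\<close> turn by (rule coprime_funpow_hex_turn)
  define g where "g = (\<lambda>z. zeta ^ k * z + w)"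
  have image: "g \<circ> l = (\<lambda>t. g z0 + complex_of_real (c * t) * slope_vector a' b')"
    using zeta_pow_mult_slope_vector[OF turn] by (simp add: g_def l fun_eq_iff algebra_simps)
  show ?thesis
    unfolding g_def[symmetric] turn
  proof
    assume "oriented_slope_line (g \<circ> l) a b"
    then obtain z1 c1 where "coprime a b" "c1 > 0"
      and line: "g \<circ> l = (\<lambda>t. z1 + complex_of_real (c1 * t) * slope_vector a b)"
      unfolding oriented_slope_line_iff by blast
    have "complex_of_real c1 * slope_vector a b = (g \<circ> l) 1 - (g \<circ> l) 0"
      by (simp add: line)
    also have "\<dots> = complex_of_real c * slope_vector a' b'"
      by (simp add: image)
    finally have "complex_of_real c1 * slope_vector a b = complex_of_real c * slope_vector a' b'" .
    then show "(a, b) = (a', b')"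
      by (rule slope_vector_ray_eq[OF \<open>coprime a b\<close> \<open>coprime a' b'\<close> \<open>c1 > 0\<close> \<open>c > 0\<close>])
  next
    assume "(a, b) = (a', b')"
    moreover have "(g \<circ> l) t \<notin> Lambda" for t
      using avoids Lambda_affine_preimage[OF assms(2)] by (auto simp: g_def)
    ultimately show "oriented_slope_line (g \<circ> l) a b"
      unfolding oriented_slope_line_iff
      by (intro conjI exI[of _ "g z0"] exI[of _ c] allI)
        (simp_all add: image \<open>c > 0\<close> \<open>coprime a' b'\<close>)
  qed
qed

lemma deck_group_image_slopes:
  assumes "oriented_slope_line l p q"
  shows "{(a, b). \<exists>g\<in>deck_group. oriented_slope_line (g \<circ> l) a b} =
    range (\<lambda>k. (hex_turn ^^ k) (p, q))"
proof (intro subset_antisym subsetI)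
  fix x
  assume "x \<in> {(a, b). \<exists>g\<in>deck_group. oriented_slope_line (g \<circ> l) a b}"
  then obtain a b g where "x = (a, b)" "g \<in> deck_group" "oriented_slope_line (g \<circ> l) a b"
    by blast
  then show "x \<in> range (\<lambda>k. (hex_turn ^^ k) (p, q))"
    using deck_group_affine oriented_slope_line_affine_image_iff[OF assms] by blast
next
  fix x
  assume "x \<in> range (\<lambda>k. (hex_turn ^^ k) (p, q))"
  then obtain k where "(hex_turn ^^ k) (p, q) = x" by blast
  then have "oriented_slope_line ((\<lambda>z. zeta ^ k * z) \<circ> l) (fst x) (snd x)"
    using oriented_slope_line_affine_image_iff[OF assms zero_in_Lambda, of k] by simp
  then show "x \<in> {(a, b). \<exists>g\<in>deck_group. oriented_slope_line (g \<circ> l) a b}"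
    using zeta_pow_rotation_in_deck_group by (auto simp: case_prod_beta)
qed

theorem lemma5p1:
  fixes l :: "real \<Rightarrow> complex" and p q :: int
  assumes "oriented_slope_line l p q"
  shows "{(a, b). \<exists>g\<in>deck_group. oriented_slope_line (g \<circ> l) a b} =
           {(p, q), (-p, -q), (q, q - p), (-q, p - q), (p - q, p), (q - p, -p)}
         \<and> card {(p, q), (-p, -q), (q, q - p), (-q, p - q), (p - q, p), (q - p, -p)} = 6"
proof -
  have "(p, q) \<noteq> (0, 0)"
    using assms by (auto simp: oriented_slope_line_def)
  then show ?thesis
    unfolding deck_group_image_slopes[OF assms] hex_turn_orbit
    using card_hex_turn_orbit by blast
qed

end
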